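(* A finite graph is $\mathcal{C}$-$\mathrm{MI}$ if and only if it is isomorphic to a disjoint union of copies of one of the following: (i) a complete graph $K_n$ ($n\ge1$); (ii) a complete bipartite graph $K_{s,s}$ with parts of the same size ($s\ge2$); (iii) a cycle $C_n$ ($n\ge3$).
   Context: Graphs are simple; subgraphs are induced. A homomorphism of graphs maps edges to edges; a monomorphism is an injective homomorphism; an automorphism is a bijective endomorphism whose inverse is also a homomorphism. A graph $G$ is $\mathcal{C}$-$\mathrm{MI}$ if every monomorphism from a finite connected induced subgraph of $G$ into $G$ extends to an automorphism of $G$. *)

theory Defs
  imports Main
begin

definition fin_graph :: "'a set \<Rightarrow> ('a \<Rightarrow> 'a \<Rightarrow> bool) \<Rightarrow> bool" where
  "fin_graph V E \<longleftrightarrow> finite V \<and> (\<forall>x y. E x y \<longrightarrow> x \<in> V \<and> y \<in> V)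
     \<and> (\<forall>x y. E x y \<longrightarrow> E y x) \<and> (\<forall>x. \<not> E x x)"

definition conn_induced :: "'a set \<Rightarrow> ('a \<Rightarrow> 'a \<Rightarrow> bool) \<Rightarrow> 'a set \<Rightarrow> bool" where
  "conn_induced V E A \<longleftrightarrow> A \<subseteq> V \<and> finite A \<and> A \<noteq> {} \<and>
     (\<forall>x\<in>A. \<forall>y\<in>A. (\<lambda>u v. u \<in> A \<and> v \<in> A \<and> E u v)\<^sup>*\<^sup>* x y)"

definition mono_from :: "'a set \<Rightarrow> ('a \<Rightarrow> 'a \<Rightarrow> bool) \<Rightarrow> 'a set \<Rightarrow> ('a \<Rightarrow> 'a) \<Rightarrow> bool" where
  "mono_from V E A f \<longleftrightarrow> f ` A \<subseteq> V \<and> inj_on f A \<and>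
     (\<forall>x\<in>A. \<forall>y\<in>A. E x y \<longrightarrow> E (f x) (f y))"

definition automorphism :: "'a set \<Rightarrow> ('a \<Rightarrow> 'a \<Rightarrow> bool) \<Rightarrow> ('a \<Rightarrow> 'a) \<Rightarrow> bool" where
  "automorphism V E g \<longleftrightarrow> bij_betw g V V \<and> (\<forall>x\<in>V. \<forall>y\<in>V. E x y \<longleftrightarrow> E (g x) (g y))"

definition C_MI :: "'a set \<Rightarrow> ('a \<Rightarrow> 'a \<Rightarrow> bool) \<Rightarrow> bool" where
  "C_MI V E \<longleftrightarrow> (\<forall>A f. conn_induced V E A \<and> mono_from V E A f \<longrightarrow>
     (\<exists>g. automorphism V E g \<and> (\<forall>x\<in>A. g x = f x)))"

definition graph_iso :: "'a set \<Rightarrow> ('a \<Rightarrow> 'a \<Rightarrow> bool) \<Rightarrow> 'b set \<Rightarrow> ('b \<Rightarrow> 'b \<Rightarrow> bool) \<Rightarrow> bool" where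
  "graph_iso V E W F \<longleftrightarrow> (\<exists>h. bij_betw h V W \<and> (\<forall>x\<in>V. \<forall>y\<in>V. E x y \<longleftrightarrow> F (h x) (h y)))"

definition K_V :: "nat \<Rightarrow> nat set" where "K_V n = {0..<n}"
definition K_E :: "nat \<Rightarrow> nat \<Rightarrow> nat \<Rightarrow> bool" where
  "K_E n i j \<longleftrightarrow> i < n \<and> j < n \<and> i \<noteq> j"

definition Kss_V :: "nat \<Rightarrow> nat set" where "Kss_V s = {0..<2*s}"
definition Kss_E :: "nat \<Rightarrow> nat \<Rightarrow> nat \<Rightarrow> bool" where
  "Kss_E s i j \<longleftrightarrow> i < 2*s \<and> j < 2*s \<and> ((i < s \<and> s \<le> j) \<or> (j < s \<and> s \<le> i))"

definition C_V :: "nat \<Rightarrow> nat set" where "C_V n = {0..<n}"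
definition C_E :: "nat \<Rightarrow> nat \<Rightarrow> nat \<Rightarrow> bool" where
  "C_E n i j \<longleftrightarrow> i < n \<and> j < n \<and> (j = (i + 1) mod n \<or> i = (j + 1) mod n)"

definition copies_V :: "nat \<Rightarrow> 'b set \<Rightarrow> (nat \<times> 'b) set" where
  "copies_V m W = {0..<m} \<times> W"
definition copies_E :: "nat \<Rightarrow> ('b \<Rightarrow> 'b \<Rightarrow> bool) \<Rightarrow> nat \<times> 'b \<Rightarrow> nat \<times> 'b \<Rightarrow> bool" where
  "copies_E m F p q \<longleftrightarrow> fst p < m \<and> fst p = fst q \<and> F (snd p) (snd q)"

end

theory Submission
  imports Defs "HOL-Number_Theory.Cong"
begin

text \<open>
  Sufficiency: connected monomorphisms into \<open>K\<^sub>n\<close> extend by an arbitrary bijection, into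
  \<open>K\<^sub>s\<^sub>,\<^sub>s\<close> (which they map side-consistently) by a side-respecting bijection,
  and into \<open>C\<^sub>n\<close> by a rotation or reflection; the property passes to disjoint unions and
  isomorphic graphs.

  Necessity: a \<open>\<C>\<close>-MI graph is vertex-transitive, hence regular, and whether a path is
  induced depends only on its number of vertices. Without induced paths on three vertices every
  component is complete. Otherwise there are non-induced paths, and a shortest one induces a cycle
  \<open>C\<^sub>l\<close> with \<open>l \<ge> 4\<close>. For \<open>l = 4\<close> the graph is triangle-free and every path on
  four vertices closes to a 4-cycle, which forces complete bipartite components; for \<open>l \<ge> 5\<close>
  the graph is 2-regular, and every component is a copy of \<open>C\<^sub>l\<close>.
\<close>

section \<open>Extending connected monomorphisms\<close>

lemma rtranclp_map:
  assumes "R\<^sup>*\<^sup>* x y" and "\<And>u v. R u v \<Longrightarrow> S (h u) (h v)"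
  shows "S\<^sup>*\<^sup>* (h x) (h y)"
  using assms(1) by induction (auto intro: rtranclp.rtrancl_into_rtrancl assms(2))

lemma inj_on_extend_to_bij_betw:
  assumes "finite S" "finite T" "card S = card T" "A \<subseteq> S" "inj_on f A" "f ` A \<subseteq> T"
  obtains g where "bij_betw g S T" "\<And>x. x \<in> A \<Longrightarrow> g x = f x"
proof -
  have "finite A" using assms(1,4) finite_subset by blast
  then have "card (S - A) = card (T - f ` A)"
    using assms by (simp add: card_Diff_subset card_image)
  then obtain b where b: "bij_betw b (S - A) (T - f ` A)"
    using finite_same_card_bij[OF finite_Diff[OF assms(1)] finite_Diff[OF assms(2)]] by blast
  define g where "g x = (if x \<in> A then f x else b x)" for x
  have "bij_betw g A (f ` A)"
    using inj_on_imp_bij_betw[OF assms(5)] by (rule bij_betw_cong[THEN iffD1, rotated]) (simp add: g_def)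
  moreover have "bij_betw g (S - A) (T - f ` A)"
    using b by (rule bij_betw_cong[THEN iffD1, rotated]) (simp add: g_def)
  ultimately have "bij_betw g (A \<union> (S - A)) (f ` A \<union> (T - f ` A))"
    by (rule bij_betw_combine) blast
  moreover have "A \<union> (S - A) = S" "f ` A \<union> (T - f ` A) = T" using assms(4,6) by auto
  ultimately show ?thesis using that g_def by auto
qed

lemma conn_induced_induct:
  assumes "conn_induced V E A" "x \<in> A" "y \<in> A" "P x"
    and "\<And>u v. u \<in> A \<Longrightarrow> v \<in> A \<Longrightarrow> E u v \<Longrightarrow> P u \<Longrightarrow> P v"
  shows "P y"
proof -
  have "(\<lambda>u v. u \<in> A \<and> v \<in> A \<and> E u v)\<^sup>*\<^sup>* x y" using assms(1-3) unfolding conn_induced_def by blast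
  then show ?thesis by induction (use assms(4,5) in blast)+
qed

lemma conn_induced_invariant:
  assumes "conn_induced V E A" "x \<in> A" "y \<in> A"
    and "\<And>u v. u \<in> A \<Longrightarrow> v \<in> A \<Longrightarrow> E u v \<Longrightarrow> h u = h v"
  shows "h x = h y"
  using conn_induced_induct[where P = "\<lambda>v. h x = h v", OF assms(1-3)] assms(4) by metis

lemma automorphismI:
  assumes "bij_betw g V V" "\<And>x y. x \<in> V \<Longrightarrow> y \<in> V \<Longrightarrow> E x y \<longleftrightarrow> E (g x) (g y)"
  shows "automorphism V E g"
  using assms unfolding automorphism_def by blast

lemma C_MI_E:
  assumes "C_MI V E" "conn_induced V E A" "mono_from V E A f"
  obtains g where "automorphism V E g" "\<And>x. x \<in> A \<Longrightarrow> g x = f x"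
  using assms unfolding C_MI_def by blast

lemma C_MI_I:
  assumes "\<And>A f. conn_induced V E A \<Longrightarrow> mono_from V E A f \<Longrightarrow>
    \<exists>g. automorphism V E g \<and> (\<forall>x\<in>A. g x = f x)"
  shows "C_MI V E"
  using assms unfolding C_MI_def by blast

lemma conn_induced_image:
  assumes "conn_induced V E A" "h ` V \<subseteq> W" "\<And>x y. x \<in> V \<Longrightarrow> y \<in> V \<Longrightarrow> E x y \<Longrightarrow> F (h x) (h y)"
  shows "conn_induced W F (h ` A)"
  unfolding conn_induced_def
proof (intro conjI ballI)
  have AV: "A \<subseteq> V" using assms(1) unfolding conn_induced_def by blast
  then show "h ` A \<subseteq> W" "finite (h ` A)" "h ` A \<noteq> {}" using assms(1,2) unfolding conn_induced_def by auto
  fix x' y' assume "x' \<in> h ` A" "y' \<in> h ` A"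
  then obtain x y where xy: "x \<in> A" "y \<in> A" "x' = h x" "y' = h y" by auto
  have "(\<lambda>u v. u \<in> A \<and> v \<in> A \<and> E u v)\<^sup>*\<^sup>* x y" using assms(1) xy unfolding conn_induced_def by auto
  then show "(\<lambda>u v. u \<in> h ` A \<and> v \<in> h ` A \<and> F u v)\<^sup>*\<^sup>* x' y'"
    unfolding xy(3,4) by (rule rtranclp_map) (use assms(3) AV in auto)
qed

lemma automorphism_conjugate:
  assumes h: "bij_betw h V W" and hE: "\<And>x y. x \<in> V \<Longrightarrow> y \<in> V \<Longrightarrow> E x y \<longleftrightarrow> F (h x) (h y)"
    and g: "automorphism W F g"
  shows "automorphism V E (inv_into V h \<circ> g \<circ> h)"
proof (rule automorphismI)
  let ?h' = "inv_into V h"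
  have h': "bij_betw ?h' W V" using h by (rule bij_betw_inv_into)
  have gW: "bij_betw g W W" and gE: "\<And>x y. x \<in> W \<Longrightarrow> y \<in> W \<Longrightarrow> F x y \<longleftrightarrow> F (g x) (g y)"
    using g unfolding automorphism_def by auto
  show "bij_betw (?h' \<circ> g \<circ> h) V V"
    using bij_betw_trans[OF bij_betw_trans[OF h gW] h'] by (simp add: comp_assoc)
  fix x y assume xy: "x \<in> V" "y \<in> V"
  then have hW: "h x \<in> W" "h y \<in> W" using bij_betw_apply[OF h] by simp_all
  then have ghW: "g (h x) \<in> W" "g (h y) \<in> W" using bij_betw_apply[OF gW] by simp_all
  have "E x y \<longleftrightarrow> F (g (h x)) (g (h y))" using hE[OF xy] gE[OF hW] by simp
  also have "\<dots> \<longleftrightarrow> E (?h' (g (h x))) (?h' (g (h y)))"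
    using hE[OF bij_betw_apply[OF h' ghW(1)] bij_betw_apply[OF h' ghW(2)]]
      bij_betw_inv_into_right[OF h ghW(1)] bij_betw_inv_into_right[OF h ghW(2)] by simp
  finally show "E x y \<longleftrightarrow> E ((?h' \<circ> g \<circ> h) x) ((?h' \<circ> g \<circ> h) y)" by simp
qed

lemma C_MI_if_graph_iso:
  assumes iso: "graph_iso V E W F" and C: "C_MI W F"
  shows "C_MI V E"
proof (rule C_MI_I)
  fix A f assume cA: "conn_induced V E A" and mf: "mono_from V E A f"
  obtain h where h: "bij_betw h V W" and hE: "\<And>x y. x \<in> V \<Longrightarrow> y \<in> V \<Longrightarrow> E x y \<longleftrightarrow> F (h x) (h y)"
    using iso unfolding graph_iso_def by blast
  define h' where "h' = inv_into V h"
  have h'h: "\<And>x. x \<in> V \<Longrightarrow> h' (h x) = x" unfolding h'_def using h bij_betw_inv_into_left by fast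
  have AV: "\<And>a. a \<in> A \<Longrightarrow> a \<in> V" using cA unfolding conn_induced_def by auto
  have fV: "\<And>a. a \<in> A \<Longrightarrow> f a \<in> V" using mf unfolding mono_from_def by auto
  have "conn_induced W F (h ` A)"
    by (rule conn_induced_image[OF cA]) (use bij_betw_imp_surj_on[OF h] hE in auto)
  moreover have "mono_from W F (h ` A) (h \<circ> f \<circ> h')"
    unfolding mono_from_def
  proof (intro conjI ballI impI)
    show "(h \<circ> f \<circ> h') ` h ` A \<subseteq> W" using AV fV h'h bij_betw_apply[OF h] by auto
    show "inj_on (h \<circ> f \<circ> h') (h ` A)"
    proof (rule inj_onI)
      fix x' y' assume "x' \<in> h ` A" "y' \<in> h ` A" "(h \<circ> f \<circ> h') x' = (h \<circ> f \<circ> h') y'"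
      then obtain x y where xy: "x \<in> A" "y \<in> A" "x' = h x" "y' = h y" "h (f x) = h (f y)"
        using AV h'h by auto
      then have "f x = f y" using h fV unfolding bij_betw_def by (meson inj_onD)
      then show "x' = y'" using mf xy unfolding mono_from_def by (metis inj_onD)
    qed
    fix x' y' assume "x' \<in> h ` A" "y' \<in> h ` A" "F x' y'"
    then obtain x y where xy: "x \<in> A" "y \<in> A" "x' = h x" "y' = h y" by auto
    with \<open>F x' y'\<close> have "E x y" using hE AV by auto
    with xy show "F ((h \<circ> f \<circ> h') x') ((h \<circ> f \<circ> h') y')"
      using mf h'h hE fV AV unfolding mono_from_def by auto
  qed
  ultimately obtain g' where g': "automorphism W F g'" "\<And>x. x \<in> h ` A \<Longrightarrow> g' x = (h \<circ> f \<circ> h') x"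
    using C_MI_E[OF C] by blast
  have "automorphism V E (h' \<circ> g' \<circ> h)" unfolding h'_def using h hE g'(1) by (rule automorphism_conjugate)
  moreover have "\<forall>x\<in>A. (h' \<circ> g' \<circ> h) x = f x" using g'(2) AV fV h'h by auto
  ultimately show "\<exists>g. automorphism V E g \<and> (\<forall>x\<in>A. g x = f x)" by blast
qed

lemma automorphism_copies_swap:
  assumes \<sigma>: "automorphism W F \<sigma>" and "i < m" "j < m"
  defines "\<tau> \<equiv> inv_into W \<sigma>"
  shows "automorphism (copies_V m W) (copies_E m F)
    (\<lambda>p. if fst p = i then (j, \<sigma> (snd p)) else if fst p = j then (i, \<tau> (snd p)) else p)"
    (is "automorphism _ _ ?g")
proof (rule automorphismI)
  have sb: "bij_betw \<sigma> W W" and sE: "\<And>x y. x \<in> W \<Longrightarrow> y \<in> W \<Longrightarrow> F (\<sigma> x) (\<sigma> y) \<longleftrightarrow> F x y"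
    using \<sigma> unfolding automorphism_def by auto
  have tb: "bij_betw \<tau> W W" unfolding \<tau>_def using sb by (rule bij_betw_inv_into)
  have st: "\<And>y. y \<in> W \<Longrightarrow> \<sigma> (\<tau> y) = y" and ts: "\<And>x. x \<in> W \<Longrightarrow> \<tau> (\<sigma> x) = x"
    unfolding \<tau>_def using sb bij_betw_inv_into_right bij_betw_inv_into_left by fast+
  have sW: "\<And>x. x \<in> W \<Longrightarrow> \<sigma> x \<in> W" and tW: "\<And>x. x \<in> W \<Longrightarrow> \<tau> x \<in> W"
    using sb tb bij_betw_apply by fast+
  have tE: "\<And>x y. x \<in> W \<Longrightarrow> y \<in> W \<Longrightarrow> F (\<tau> x) (\<tau> y) \<longleftrightarrow> F x y"
    using sE st tW by metis
  let ?g' = "\<lambda>p. if fst p = j then (i, \<tau> (snd p)) else if fst p = i then (j, \<sigma> (snd p)) else p"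
  show "bij_betw ?g (copies_V m W) (copies_V m W)"
  proof (rule bij_betw_byWitness[where f' = ?g'])
    show "\<forall>p\<in>copies_V m W. ?g' (?g p) = p" "\<forall>p\<in>copies_V m W. ?g (?g' p) = p"
      using st ts unfolding copies_V_def by auto
    show "?g ` copies_V m W \<subseteq> copies_V m W" "?g' ` copies_V m W \<subseteq> copies_V m W"
      using assms(2,3) sW tW unfolding copies_V_def by auto
  qed
  fix p q assume "p \<in> copies_V m W" "q \<in> copies_V m W"
  then show "copies_E m F p q \<longleftrightarrow> copies_E m F (?g p) (?g q)"
    using assms(2,3) sE tE unfolding copies_V_def copies_E_def by (auto simp: mem_Times_iff)
qed

lemma copies_mono_fst:
  assumes cA: "conn_induced (copies_V m W) (copies_E m F) A"
    and mf: "mono_from (copies_V m W) (copies_E m F) A f" and "a \<in> A" "b \<in> A"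
  shows "fst a = fst b" "fst (f a) = fst (f b)"
proof -
  show "fst a = fst b" by (rule conn_induced_invariant[OF cA assms(3,4)]) (simp add: copies_E_def)
  have "fst (f u) = fst (f v)" if "u \<in> A" "v \<in> A" "copies_E m F u v" for u v
    using mf that unfolding mono_from_def copies_E_def by simp
  then show "fst (f a) = fst (f b)" by (rule conn_induced_invariant[OF cA assms(3,4)])
qed

lemma C_MI_copies:
  assumes C: "C_MI W F"
  shows "C_MI (copies_V m W) (copies_E m F)"
proof (rule C_MI_I)
  fix A f assume cA: "conn_induced (copies_V m W) (copies_E m F) A"
    and mf: "mono_from (copies_V m W) (copies_E m F) A f"
  obtain a0 where a0: "a0 \<in> A" using cA unfolding conn_induced_def by auto
  define i where "i = fst a0"
  define j where "j = fst (f a0)"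
  have fstA: "\<And>a. a \<in> A \<Longrightarrow> fst a = i" and fstf: "\<And>a. a \<in> A \<Longrightarrow> fst (f a) = j"
    unfolding i_def j_def using copies_mono_fst[OF cA mf _ a0] by blast+
  have AV: "A \<subseteq> copies_V m W" using cA unfolding conn_induced_def by auto
  have fV: "\<And>a. a \<in> A \<Longrightarrow> f a \<in> copies_V m W" using mf unfolding mono_from_def by auto
  have ij: "i < m" "j < m" using AV a0 fV[OF a0] unfolding i_def j_def copies_V_def by auto
  have A_eq: "A = Pair i ` snd ` A" using fstA by force
  define f0 where "f0 = (\<lambda>w. snd (f (i, w)))"
  have "conn_induced W F (snd ` A)"
    using cA by (rule conn_induced_image) (auto simp: copies_V_def copies_E_def)
  moreover have "mono_from W F (snd ` A) f0"
    unfolding mono_from_def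
  proof (intro conjI ballI impI)
    show "f0 ` snd ` A \<subseteq> W" using fV A_eq unfolding f0_def copies_V_def by force
    show "inj_on f0 (snd ` A)"
    proof (rule inj_onI)
      fix x y assume "x \<in> snd ` A" "y \<in> snd ` A" "f0 x = f0 y"
      moreover have "f (i, x) = (j, f0 x)" if "x \<in> snd ` A" for x
        using fstf that A_eq unfolding f0_def by (metis imageI prod.collapse)
      ultimately show "x = y" using mf A_eq unfolding mono_from_def inj_on_def by (metis imageI prod.inject)
    qed
    fix x y assume "x \<in> snd ` A" "y \<in> snd ` A" "F x y"
    then have "copies_E m F (f (i, x)) (f (i, y))"
      using mf A_eq ij unfolding mono_from_def copies_E_def by (metis fst_conv imageI snd_conv)
    then show "F (f0 x) (f0 y)" unfolding f0_def copies_E_def by auto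
  qed
  ultimately obtain \<sigma> where \<sigma>: "automorphism W F \<sigma>" "\<And>x. x \<in> snd ` A \<Longrightarrow> \<sigma> x = f0 x"
    using C_MI_E[OF C] by blast
  show "\<exists>g. automorphism (copies_V m W) (copies_E m F) g \<and> (\<forall>x\<in>A. g x = f x)"
  proof (intro exI conjI ballI)
    show "automorphism (copies_V m W) (copies_E m F) (\<lambda>p. if fst p = i then (j, \<sigma> (snd p))
        else if fst p = j then (i, inv_into W \<sigma> (snd p)) else p)"
      using automorphism_copies_swap[OF \<sigma>(1) ij] .
    fix a assume a: "a \<in> A"
    then have "\<sigma> (snd a) = snd (f a)" using \<sigma>(2) fstA unfolding f0_def by (metis imageI prod.collapse)
    then show "(if fst a = i then (j, \<sigma> (snd a)) else if fst a = j then (i, inv_into W \<sigma> (snd a)) else a) = f a"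
      using fstA[OF a] fstf[OF a] by (metis prod.collapse)
  qed
qed

section \<open>Complete graphs, complete bipartite graphs and cycles\<close>

lemma automorphism_K:
  assumes "bij_betw g (K_V n) (K_V n)"
  shows "automorphism (K_V n) (K_E n) g"
proof (rule automorphismI[OF assms])
  fix x y assume "x \<in> K_V n" "y \<in> K_V n"
  moreover from this have "g x \<in> K_V n" "g y \<in> K_V n" "g x = g y \<longleftrightarrow> x = y"
    using assms bij_betw_apply bij_betw_imp_inj_on inj_on_eq_iff by metis+
  ultimately show "K_E n x y \<longleftrightarrow> K_E n (g x) (g y)" unfolding K_E_def K_V_def by auto
qed

lemma C_MI_K: "C_MI (K_V n) (K_E n)"
proof (rule C_MI_I)
  fix A f assume "conn_induced (K_V n) (K_E n) A" "mono_from (K_V n) (K_E n) A f"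
  then have "A \<subseteq> K_V n" "inj_on f A" "f ` A \<subseteq> K_V n"
    unfolding conn_induced_def mono_from_def by auto
  then obtain g where "bij_betw g (K_V n) (K_V n)" "\<And>x. x \<in> A \<Longrightarrow> g x = f x"
    by (rule inj_on_extend_to_bij_betw[rotated 3]) (simp_all add: K_V_def)
  then show "\<exists>g. automorphism (K_V n) (K_E n) g \<and> (\<forall>x\<in>A. g x = f x)"
    using automorphism_K by blast
qed

lemma Kss_E_iff: "x \<in> Kss_V s \<Longrightarrow> y \<in> Kss_V s \<Longrightarrow> Kss_E s x y \<longleftrightarrow> (x < s \<longleftrightarrow> \<not> y < s)"
  unfolding Kss_E_def Kss_V_def by auto

lemma automorphism_Kss:
  assumes "bij_betw g (Kss_V s) (Kss_V s)" "\<And>x. x \<in> Kss_V s \<Longrightarrow> g x < s \<longleftrightarrow> (x < s \<longleftrightarrow> b)"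
  shows "automorphism (Kss_V s) (Kss_E s) g"
proof (rule automorphismI[OF assms(1)])
  fix x y assume "x \<in> Kss_V s" "y \<in> Kss_V s"
  moreover from this have "g x \<in> Kss_V s" "g y \<in> Kss_V s" using assms(1) bij_betw_apply by fast+
  ultimately show "Kss_E s x y \<longleftrightarrow> Kss_E s (g x) (g y)" using assms(2) Kss_E_iff by metis
qed

lemma Kss_mono_sides:
  assumes cA: "conn_induced (Kss_V s) (Kss_E s) A" and mf: "mono_from (Kss_V s) (Kss_E s) A f"
  obtains b where "\<And>a. a \<in> A \<Longrightarrow> f a < s \<longleftrightarrow> (a < s \<longleftrightarrow> b)"
proof -
  have AV: "A \<subseteq> Kss_V s" and fV: "f ` A \<subseteq> Kss_V s"
    using cA mf unfolding conn_induced_def mono_from_def by auto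
  obtain a0 where a0: "a0 \<in> A" using cA unfolding conn_induced_def by auto
  have "(a0 < s \<longleftrightarrow> f a0 < s) = (a < s \<longleftrightarrow> f a < s)" if "a \<in> A" for a
  proof (rule conn_induced_invariant[OF cA a0 that])
    fix u v assume "u \<in> A" "v \<in> A" "Kss_E s u v"
    moreover from this have "Kss_E s (f u) (f v)" using mf unfolding mono_from_def by blast
    ultimately show "(u < s \<longleftrightarrow> f u < s) = (v < s \<longleftrightarrow> f v < s)"
      using AV fV Kss_E_iff by (metis image_subset_iff subsetD)
  qed
  then show ?thesis using that[of "a0 < s \<longleftrightarrow> f a0 < s"] by blast
qed

lemma C_MI_Kss: "C_MI (Kss_V s) (Kss_E s)"
proof (rule C_MI_I)
  fix A f assume cA: "conn_induced (Kss_V s) (Kss_E s) A" and mf: "mono_from (Kss_V s) (Kss_E s) A f"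
  have AV: "A \<subseteq> Kss_V s" and fV: "f ` A \<subseteq> Kss_V s" and finj: "inj_on f A"
    using cA mf unfolding conn_induced_def mono_from_def by auto
  obtain b where side: "\<And>a. a \<in> A \<Longrightarrow> f a < s \<longleftrightarrow> (a < s \<longleftrightarrow> b)" using Kss_mono_sides[OF cA mf] by blast
  define L where "L = {0..<s}"
  define R where "R = {s..<2*s}"
  have LR: "Kss_V s = L \<union> R" "L \<inter> R = {}" "card L = card R" unfolding Kss_V_def L_def R_def by auto
  define T1 where "T1 = (if b then L else R)"
  define T2 where "T2 = (if b then R else L)"
  have T12: "Kss_V s = T1 \<union> T2" "T1 \<inter> T2 = {}" using LR unfolding T1_def T2_def by auto
  have "f a \<in> (if a < s then T1 else T2)" if "a \<in> A" for a
    using side[OF that] fV that unfolding T1_def T2_def L_def R_def Kss_V_def by auto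
  then have "f ` (A \<inter> L) \<subseteq> T1" "f ` (A \<inter> R) \<subseteq> T2" unfolding L_def R_def by force+
  moreover have "finite L" "finite R" "card L = card T1" "card R = card T2" "finite T1" "finite T2"
    using LR unfolding T1_def T2_def L_def R_def by auto
  moreover have "inj_on f (A \<inter> L)" "inj_on f (A \<inter> R)" using finj inj_on_subset by blast+
  ultimately obtain gL gR where gL: "bij_betw gL L T1" "\<And>x. x \<in> A \<inter> L \<Longrightarrow> gL x = f x"
    and gR: "bij_betw gR R T2" "\<And>x. x \<in> A \<inter> R \<Longrightarrow> gR x = f x"
    by (metis inf_le2 inj_on_extend_to_bij_betw)
  define g where "g x = (if x < s then gL x else gR x)" for x
  have "bij_betw g L T1" using gL(1) by (rule bij_betw_cong[THEN iffD1, rotated]) (simp add: g_def L_def)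
  moreover have "bij_betw g R T2" using gR(1) by (rule bij_betw_cong[THEN iffD1, rotated]) (simp add: g_def R_def)
  ultimately have gb: "bij_betw g (Kss_V s) (Kss_V s)" using LR T12 bij_betw_combine by metis
  have "g x < s \<longleftrightarrow> (x < s \<longleftrightarrow> b)" if "x \<in> Kss_V s" for x
  proof (cases "x < s")
    case True
    then have "g x \<in> T1" using bij_betw_apply[OF gL(1)] unfolding g_def L_def by simp
    then show ?thesis using True unfolding T1_def L_def R_def by (cases b) auto
  next
    case False
    then have "g x \<in> T2" using that bij_betw_apply[OF gR(1)] unfolding g_def R_def Kss_V_def by simp
    then show ?thesis using False unfolding T2_def L_def R_def by (cases b) auto
  qed
  then have "automorphism (Kss_V s) (Kss_E s) g" using gb by (rule automorphism_Kss[rotated])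
  moreover have "\<forall>x\<in>A. g x = f x" using gL(2) gR(2) AV unfolding g_def L_def R_def Kss_V_def by auto
  ultimately show "\<exists>g. automorphism (Kss_V s) (Kss_E s) g \<and> (\<forall>x\<in>A. g x = f x)" by blast
qed

lemma cong_mult_sign_iff:
  fixes x y n :: int
  assumes "e \<in> {1, -1}"
  shows "[e * x = e * y] (mod n) \<longleftrightarrow> [x = y] (mod n)"
  using assms by (auto simp: cong_minus_minus_iff)

lemma cong_less_imp_eq_of_nat:
  "i < n \<Longrightarrow> j < n \<Longrightarrow> [int i = int j] (mod int n) \<Longrightarrow> i = j"
  by (simp add: cong_int_iff cong_less_imp_eq_nat)

lemma C_E_iff_cong:
  "C_E n i j \<longleftrightarrow> i < n \<and> j < n \<and> (\<exists>e\<in>{1, -1}. [int j = int i + e] (mod int n))"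
proof -
  have step: "b = (a + 1) mod n \<longleftrightarrow> [int b = int a + 1] (mod int n)" if "b < n" for a b
    using that by (metis cong_def cong_int_iff cong_sym mod_less of_nat_Suc add.commute Suc_eq_plus1)
  have "[int i = int j + 1] (mod int n) \<longleftrightarrow> [int j = int i + (-1)] (mod int n)"
    by (metis add.commute add_diff_cancel_left' cong_add_rcancel cong_sym_eq diff_conv_add_uminus)
  then show ?thesis unfolding C_E_def using step by auto
qed

text \<open>For \<open>e = 1\<close> a rotation of \<open>C\<^sub>n\<close>, for \<open>e = -1\<close> a reflection.\<close>
definition cycle_map :: "nat \<Rightarrow> int \<Rightarrow> int \<Rightarrow> nat \<Rightarrow> nat" where
  "cycle_map n a e i = nat ((a + e * int i) mod int n)"

lemma cycle_map_less: "0 < n \<Longrightarrow> cycle_map n a e i < n"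
  unfolding cycle_map_def by (simp add: nat_less_iff)

lemma cycle_map_cong: "0 < n \<Longrightarrow> [int (cycle_map n a e i) = a + e * int i] (mod int n)"
  unfolding cycle_map_def by (simp add: cong_def)

lemma cycle_map_step_cong:
  assumes "0 < n" "e \<in> {1, -1}"
  shows "[int (cycle_map n a e j) = int (cycle_map n a e i) + d] (mod int n)
    \<longleftrightarrow> [int j = int i + e * d] (mod int n)"
proof -
  have "[int (cycle_map n a e j) = int (cycle_map n a e i) + d] (mod int n)
      \<longleftrightarrow> [a + e * int j = a + (e * int i + d)] (mod int n)"
    using cycle_map_cong[OF assms(1)] unfolding cong_def by (metis add.assoc mod_add_left_eq)
  also have "\<dots> \<longleftrightarrow> [e * int j = e * (int i + e * d)] (mod int n)"
    using assms(2) by (auto simp: cong_add_lcancel algebra_simps)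
  also have "\<dots> \<longleftrightarrow> [int j = int i + e * d] (mod int n)"
    using assms(2) by (rule cong_mult_sign_iff)
  finally show ?thesis .
qed

lemma automorphism_cycle_map:
  assumes "0 < n" "e \<in> {1, -1}"
  shows "automorphism (C_V n) (C_E n) (cycle_map n a e)"
proof (rule automorphismI)
  have "inj_on (cycle_map n a e) (C_V n)"
  proof (rule inj_onI)
    fix i j assume "i \<in> C_V n" "j \<in> C_V n" "cycle_map n a e i = cycle_map n a e j"
    then show "i = j"
      using cycle_map_step_cong[OF assms, of a j i 0] cong_less_imp_eq_of_nat unfolding C_V_def by auto
  qed
  moreover have "cycle_map n a e ` C_V n \<subseteq> C_V n" using cycle_map_less[OF assms(1)] unfolding C_V_def by auto
  ultimately show "bij_betw (cycle_map n a e) (C_V n) (C_V n)"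
    unfolding bij_betw_def C_V_def by (simp add: endo_inj_surj)
  fix i j assume ij: "i \<in> C_V n" "j \<in> C_V n"
  let ?\<phi> = "cycle_map n a e"
  have "C_E n (?\<phi> i) (?\<phi> j) \<longleftrightarrow> (\<exists>d\<in>{1, -1}. [int (?\<phi> j) = int (?\<phi> i) + d] (mod int n))"
    unfolding C_E_iff_cong using cycle_map_less[OF assms(1)] by blast
  also have "\<dots> \<longleftrightarrow> (\<exists>d\<in>{1, -1}. [int j = int i + e * d] (mod int n))"
    using cycle_map_step_cong[OF assms] by blast
  also have "\<dots> \<longleftrightarrow> (\<exists>d\<in>{1, -1}. [int j = int i + d] (mod int n))"
    using assms(2) by auto
  also have "\<dots> \<longleftrightarrow> C_E n i j" unfolding C_E_iff_cong using ij unfolding C_V_def by simp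
  finally show "C_E n i j \<longleftrightarrow> C_E n (?\<phi> i) (?\<phi> j)" ..
qed

lemma C_vertex_transitive:
  assumes "a0 < n" "b0 < n"
  obtains \<phi> where "automorphism (C_V n) (C_E n) \<phi>" "\<phi> a0 = b0"
proof
  have "0 < n" using assms by simp
  show "automorphism (C_V n) (C_E n) (cycle_map n (int b0 - int a0) 1)"
    using automorphism_cycle_map[OF \<open>0 < n\<close>] by simp
  show "cycle_map n (int b0 - int a0) 1 a0 = b0" using assms unfolding cycle_map_def by simp
qed

lemma C_edge_transitive:
  assumes "C_E n a0 a1" "C_E n b0 b1"
  obtains \<phi> where "automorphism (C_V n) (C_E n) \<phi>" "\<phi> a0 = b0" "\<phi> a1 = b1"
proof -
  obtain ea eb where e: "ea \<in> {1, -1}" "eb \<in> {1, -1}" and lt: "a0 < n" "a1 < n" "b0 < n" "b1 < n"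
    and a: "[int a1 = int a0 + ea] (mod int n)" and b: "[int b1 = int b0 + eb] (mod int n)"
    using assms unfolding C_E_iff_cong by blast
  define e where "e = ea * eb"
  define \<phi> where "\<phi> = cycle_map n (int b0 - e * int a0) e"
  have n: "0 < n" and "e \<in> {1, -1}" using lt e unfolding e_def by auto
  have "\<phi> a0 = b0" using lt unfolding \<phi>_def cycle_map_def by simp
  moreover have "[int (\<phi> a1) = int (\<phi> a0) + eb] (mod int n)"
    unfolding \<phi>_def cycle_map_step_cong[OF n \<open>e \<in> {1, -1}\<close>] using a e unfolding e_def by auto
  then have "\<phi> a1 = b1"
    using b lt \<open>\<phi> a0 = b0\<close> cycle_map_less[OF n] cong_less_imp_eq_of_nat unfolding \<phi>_def
    by (metis cong_sym cong_trans)
  ultimately show ?thesis using that automorphism_cycle_map[OF n \<open>e \<in> {1, -1}\<close>] unfolding \<phi>_def by blast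
qed

lemma C_E_unique_other_neighbour:
  assumes "C_E n p a" "C_E n p b" "C_E n p q" "a \<noteq> q" "b \<noteq> q"
  shows "a = b"
proof -
  obtain ea eb eq where e: "ea \<in> {1, -1}" "eb \<in> {1, -1}" "eq \<in> {1, -1}" and lt: "a < n" "b < n" "q < n"
    and cg: "[int a = int p + ea] (mod int n)" "[int b = int p + eb] (mod int n)" "[int q = int p + eq] (mod int n)"
    using assms(1-3) unfolding C_E_iff_cong by blast
  have "ea \<noteq> eq" "eb \<noteq> eq"
    using cg lt assms(4,5) cong_less_imp_eq_of_nat by (metis cong_sym cong_trans)+
  then have "ea = eb" using e by auto
  then show ?thesis using cg lt cong_less_imp_eq_of_nat by (metis cong_sym cong_trans)
qed

lemma C_automorphism_matching:
  assumes "a0 \<in> A" "a0 < n" "f a0 < n"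
    and fE: "\<And>x y. x \<in> A \<Longrightarrow> y \<in> A \<Longrightarrow> C_E n x y \<Longrightarrow> C_E n (f x) (f y)"
  obtains \<phi> where "automorphism (C_V n) (C_E n) \<phi>" "\<phi> a0 = f a0"
    and "\<exists>a1\<in>A. C_E n a0 a1 \<Longrightarrow> \<exists>a1\<in>A. C_E n a0 a1 \<and> \<phi> a1 = f a1"
proof (cases "\<exists>a1\<in>A. C_E n a0 a1")
  case True
  then obtain a1 where a1: "a1 \<in> A" "C_E n a0 a1" by blast
  from C_edge_transitive[OF a1(2) fE[OF assms(1) a1]] that a1 show ?thesis by metis
next
  case False
  from C_vertex_transitive[OF assms(2,3)] that False show ?thesis by metis
qed

text \<open>An automorphism that agrees with the monomorphism on a vertex and, if possible, on one of
  its neighbours agrees with it everywhere: both must send the second neighbour of an agreeing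
  vertex to the unique other neighbour of its image.\<close>
lemma C_MI_C: "C_MI (C_V n) (C_E n)"
proof (rule C_MI_I)
  fix A f assume cA: "conn_induced (C_V n) (C_E n) A" and mf: "mono_from (C_V n) (C_E n) A f"
  have AV: "\<And>a. a \<in> A \<Longrightarrow> a < n" using cA unfolding conn_induced_def C_V_def by auto
  have fV: "\<And>a. a \<in> A \<Longrightarrow> f a < n" and finj: "inj_on f A"
    and fE: "\<And>x y. x \<in> A \<Longrightarrow> y \<in> A \<Longrightarrow> C_E n x y \<Longrightarrow> C_E n (f x) (f y)"
    using mf unfolding mono_from_def C_V_def by auto
  obtain a0 where a0: "a0 \<in> A" using cA unfolding conn_induced_def by auto
  obtain \<phi> where \<phi>: "automorphism (C_V n) (C_E n) \<phi>" "\<phi> a0 = f a0"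
    and \<phi>1: "\<exists>a1\<in>A. C_E n a0 a1 \<Longrightarrow> \<exists>a1\<in>A. C_E n a0 a1 \<and> \<phi> a1 = f a1"
    using C_automorphism_matching[where f = f, OF a0 AV[OF a0] fV[OF a0] fE] by blast
  have \<phi>inj: "\<And>x y. x < n \<Longrightarrow> y < n \<Longrightarrow> \<phi> x = \<phi> y \<Longrightarrow> x = y"
    and \<phi>E: "\<And>x y. x < n \<Longrightarrow> y < n \<Longrightarrow> C_E n x y \<longleftrightarrow> C_E n (\<phi> x) (\<phi> y)"
    using \<phi>(1) unfolding automorphism_def bij_betw_def C_V_def inj_on_def by auto
  have spread: "f w = \<phi> w"
    if "u \<in> A" "v \<in> A" "w \<in> A" "C_E n v u" "C_E n v w" "w \<noteq> u" "f u = \<phi> u" "f v = \<phi> v" for u v w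
  proof (rule C_E_unique_other_neighbour)
    show "C_E n (\<phi> v) (f w)" using fE[of v w] that by simp
    show "C_E n (\<phi> v) (\<phi> w)" "C_E n (\<phi> v) (\<phi> u)" using \<phi>E AV that by blast+
    show "f w \<noteq> \<phi> u" "\<phi> w \<noteq> \<phi> u" using finj \<phi>inj AV that unfolding inj_on_def by metis+
  qed
  define Q where "Q u \<longleftrightarrow> f u = \<phi> u \<and> (\<forall>w\<in>A. C_E n u w \<longrightarrow> f w = \<phi> w)" for u
  have "Q a0"
    unfolding Q_def
  proof (intro conjI ballI impI)
    show "f a0 = \<phi> a0" using \<phi>(2) by simp
    fix w assume w: "w \<in> A" "C_E n a0 w"
    obtain a1 where a1: "a1 \<in> A" "C_E n a0 a1" "\<phi> a1 = f a1" using \<phi>1 w by blast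
    show "f w = \<phi> w"
      using spread[OF a1(1) a0 w(1) a1(2) w(2)] a1 \<phi>(2) by (cases "w = a1") auto
  qed
  have "Q v" if "v \<in> A" for v
  proof (rule conn_induced_induct[where P = Q, OF cA a0 that \<open>Q a0\<close>])
    fix u v assume uv: "u \<in> A" "v \<in> A" "C_E n u v" and "Q u"
    then have "C_E n v u" unfolding C_E_def by auto
    then show "Q v"
      using \<open>Q u\<close> uv spread[OF uv(1,2)] unfolding Q_def by metis
  qed
  then show "\<exists>g. automorphism (C_V n) (C_E n) g \<and> (\<forall>x\<in>A. g x = f x)"
    using \<phi>(1) unfolding Q_def by auto
qed

lemma graph_iso_K:
  assumes "finite C" "\<And>x y. x \<in> C \<Longrightarrow> y \<in> C \<Longrightarrow> E x y \<longleftrightarrow> x \<noteq> y"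
  shows "graph_iso C E (K_V (card C)) (K_E (card C))"
proof -
  obtain \<phi> where \<phi>: "bij_betw \<phi> C (K_V (card C))"
    using finite_same_card_bij[OF assms(1)] unfolding K_V_def by (metis card_atLeastLessThan diff_zero finite_atLeastLessThan)
  have "E x y \<longleftrightarrow> K_E (card C) (\<phi> x) (\<phi> y)" if "x \<in> C" "y \<in> C" for x y
    using that assms(2) bij_betw_apply[OF \<phi>] inj_on_eq_iff[OF bij_betw_imp_inj_on[OF \<phi>]]
    unfolding K_E_def K_V_def by auto
  then show ?thesis using \<phi> unfolding graph_iso_def by blast
qed

lemma graph_iso_Kss:
  assumes "finite L" "finite R" "card L = s" "card R = s" "L \<inter> R = {}"
    and "\<And>x y. x \<in> L \<union> R \<Longrightarrow> y \<in> L \<union> R \<Longrightarrow> E x y \<longleftrightarrow> (x \<in> L \<longleftrightarrow> y \<in> R)"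
  shows "graph_iso (L \<union> R) E (Kss_V s) (Kss_E s)"
proof -
  obtain \<alpha> where \<alpha>: "bij_betw \<alpha> L {0..<s}" using finite_same_card_bij[OF assms(1), of "{0..<s}"] assms(3) by auto
  obtain \<beta> where \<beta>: "bij_betw \<beta> R {s..<2*s}" using finite_same_card_bij[OF assms(2), of "{s..<2*s}"] assms(4) by auto
  define \<phi> where "\<phi> x = (if x \<in> L then \<alpha> x else \<beta> x)" for x
  have "bij_betw \<phi> L {0..<s}" using \<alpha> by (rule bij_betw_cong[THEN iffD1, rotated]) (simp add: \<phi>_def)
  moreover have "bij_betw \<phi> R {s..<2*s}"
    using \<beta> by (rule bij_betw_cong[THEN iffD1, rotated]) (use assms(5) in \<open>auto simp: \<phi>_def\<close>)
  ultimately have \<phi>b: "bij_betw \<phi> (L \<union> R) ({0..<s} \<union> {s..<2*s})" by (rule bij_betw_combine) auto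
  moreover have "{0..<s} \<union> {s..<2*s} = Kss_V s" unfolding Kss_V_def by auto
  ultimately have "bij_betw \<phi> (L \<union> R) (Kss_V s)" by simp
  moreover have "\<phi> x < s \<longleftrightarrow> x \<in> L" if "x \<in> L \<union> R" for x
  proof (cases "x \<in> L")
    case False
    then have "\<beta> x \<in> {s..<2*s}" using that bij_betw_apply[OF \<beta>] by blast
    then show ?thesis using False unfolding \<phi>_def by simp
  qed (use bij_betw_apply[OF \<alpha>] \<phi>_def in auto)
  ultimately show ?thesis
    unfolding graph_iso_def using assms(5,6) Kss_E_iff bij_betw_apply by (smt (verit) disjoint_iff UnE)
qed

lemma graph_iso_C:
  assumes "distinct zs" "\<And>i j. i < length zs \<Longrightarrow> j < length zs \<Longrightarrow> E (zs!i) (zs!j) \<longleftrightarrow> C_E (length zs) i j"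
  shows "graph_iso (set zs) E (C_V (length zs)) (C_E (length zs))"
proof -
  have bn: "bij_betw (nth zs) {..<length zs} (set zs)" using assms(1) by (rule bij_betw_nth) simp_all
  define \<phi> where "\<phi> = inv_into {..<length zs} (nth zs)"
  have "bij_betw \<phi> (set zs) (C_V (length zs))"
    unfolding \<phi>_def C_V_def using bij_betw_inv_into[OF bn] by (simp add: atLeast0LessThan)
  moreover have "\<phi> (zs!i) = i" if "i < length zs" for i
    unfolding \<phi>_def using bn that by (simp add: bij_betw_def inv_into_f_f)
  ultimately show ?thesis unfolding graph_iso_def using assms(2) by (metis in_set_conv_nth)
qed

lemma C_E_iff_index:
  "C_E n i j \<longleftrightarrow> i < n \<and> j < n \<and>
     (j = Suc i \<or> i = Suc j \<or> (i = 0 \<and> j = n - 1) \<or> (j = 0 \<and> i = n - 1))"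
  unfolding C_E_def by (cases "Suc i = n"; cases "Suc j = n") auto

lemma C_E_two_neighbours:
  assumes "3 \<le> n" "i < n"
  obtains j1 j2 where "j1 \<noteq> j2" "C_E n i j1" "C_E n i j2"
proof
  show "(if Suc i < n then Suc i else 0) \<noteq> (if i = 0 then n - 1 else i - 1)"
    "C_E n i (if Suc i < n then Suc i else 0)" "C_E n i (if i = 0 then n - 1 else i - 1)"
    using assms unfolding C_E_iff_index by auto
qed

section \<open>Components and paths of finite graphs\<close>

locale finite_graph =
  fixes V :: "'a set" and E :: "'a \<Rightarrow> 'a \<Rightarrow> bool"
  assumes fin_graph: "fin_graph V E"
begin

lemma finite_V: "finite V"
  and edge_in_V: "E x y \<Longrightarrow> x \<in> V" "E x y \<Longrightarrow> y \<in> V"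
  and edge_sym: "E x y \<Longrightarrow> E y x"
  and no_loop: "\<not> E x x"
  using fin_graph unfolding fin_graph_def by blast+

definition nbrs :: "'a \<Rightarrow> 'a set" where
  "nbrs v = {u. E v u}"

lemma nbrs_subset: "nbrs v \<subseteq> V"
  unfolding nbrs_def using edge_in_V by blast

lemma finite_nbrs: "finite (nbrs v)"
  using nbrs_subset finite_V by (rule finite_subset)

lemma automorphism_nbrs:
  assumes \<sigma>: "automorphism V E \<sigma>" and u: "u \<in> V"
  shows "bij_betw \<sigma> (nbrs u) (nbrs (\<sigma> u))"
proof -
  have b: "bij_betw \<sigma> V V" and \<sigma>E: "\<And>x y. x \<in> V \<Longrightarrow> y \<in> V \<Longrightarrow> E x y \<longleftrightarrow> E (\<sigma> x) (\<sigma> y)"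
    using \<sigma> unfolding automorphism_def by auto
  have "\<sigma> ` nbrs u = nbrs (\<sigma> u)"
  proof
    show "\<sigma> ` nbrs u \<subseteq> nbrs (\<sigma> u)" using \<sigma>E nbrs_subset u unfolding nbrs_def by blast
    show "nbrs (\<sigma> u) \<subseteq> \<sigma> ` nbrs u"
    proof
      fix w assume w: "w \<in> nbrs (\<sigma> u)"
      then have "w \<in> \<sigma> ` V" using b nbrs_subset unfolding bij_betw_def by blast
      then obtain w' where "w' \<in> V" "w = \<sigma> w'" by blast
      with w show "w \<in> \<sigma> ` nbrs u" using \<sigma>E u unfolding nbrs_def by auto
    qed
  qed
  moreover have "inj_on \<sigma> (nbrs u)" using inj_on_subset[OF bij_betw_imp_inj_on[OF b] nbrs_subset] .
  ultimately show ?thesis unfolding bij_betw_def by blast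
qed

definition component :: "'a \<Rightarrow> 'a set" where
  "component r = {u. E\<^sup>*\<^sup>* r u}"

lemma in_component_self: "r \<in> component r"
  unfolding component_def by simp

lemma component_subset:
  assumes "r \<in> V"
  shows "component r \<subseteq> V"
proof
  fix u assume "u \<in> component r"
  then have "E\<^sup>*\<^sup>* r u" unfolding component_def by simp
  then show "u \<in> V" by induction (use assms edge_in_V in auto)
qed

lemma component_eq:
  assumes "u \<in> component r"
  shows "component u = component r"
proof -
  have "symp E\<^sup>*\<^sup>*" using edge_sym by (intro symp_rtranclp) (simp add: symp_def)
  then show ?thesis using assms unfolding component_def symp_def by (auto intro: rtranclp_trans)
qed

lemma edge_component: "E u v \<Longrightarrow> v \<in> component u"
  unfolding component_def by simp

lemma component_index_eq_iff:
  assumes "bij_betw idx (component ` V) I" "x \<in> V" "y \<in> V"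
  shows "idx (component x) = idx (component y) \<longleftrightarrow> component x = component y"
  using assms inj_on_eq_iff[OF bij_betw_imp_inj_on[OF assms(1)]] by blast

lemma bij_betw_component_coordinates:
  assumes idx: "bij_betw idx (component ` V) {0..<m}"
    and \<Psi>: "\<And>r. r \<in> V \<Longrightarrow> bij_betw (\<Psi> (component r)) (component r) W"
  shows "bij_betw (\<lambda>v. (idx (component v), \<Psi> (component v) v)) V (copies_V m W)"
proof (rule bij_betwI')
  fix x y assume xy: "x \<in> V" "y \<in> V"
  show "(idx (component x), \<Psi> (component x) x) = (idx (component y), \<Psi> (component y) y) \<longleftrightarrow> x = y"
  proof
    assume eq: "(idx (component x), \<Psi> (component x) x) = (idx (component y), \<Psi> (component y) y)"
    then have c: "component x = component y" using component_index_eq_iff[OF idx xy] by simp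
    then have "y \<in> component x" using in_component_self by metis
    then show "x = y"
      using eq c \<Psi>[OF xy(1)] in_component_self inj_on_eq_iff unfolding bij_betw_def by (metis prod.inject)
  qed simp
next
  fix x assume "x \<in> V"
  then show "(idx (component x), \<Psi> (component x) x) \<in> copies_V m W"
    using bij_betw_apply[OF idx] bij_betw_apply[OF \<Psi>] in_component_self unfolding copies_V_def by auto
next
  fix p assume "p \<in> copies_V m W"
  then obtain i w where p: "p = (i, w)" "i < m" "w \<in> W" unfolding copies_V_def by auto
  then obtain r where r: "r \<in> V" "idx (component r) = i"
    using idx unfolding bij_betw_def by (metis atLeastLessThan_iff image_iff le0)
  then obtain x where x: "x \<in> component r" "\<Psi> (component r) x = w"
    using \<Psi> p(3) unfolding bij_betw_def by blast
  then have "component x = component r" "x \<in> V" using component_eq component_subset r by blast+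
  then show "\<exists>x\<in>V. p = (idx (component x), \<Psi> (component x) x)" using p r x by metis
qed

lemma graph_iso_copies:
  assumes loc: "\<And>r. r \<in> V \<Longrightarrow> graph_iso (component r) E W F"
  shows "graph_iso V E (copies_V (card (component ` V)) W) (copies_E (card (component ` V)) F)"
proof -
  define m where "m = card (component ` V)"
  obtain idx0 where "bij_betw idx0 {0..<m} (component ` V)"
    unfolding m_def using ex_bij_betw_nat_finite finite_V by blast
  then have idx: "bij_betw (inv_into {0..<m} idx0) (component ` V) {0..<m}" (is "bij_betw ?idx _ _")
    by (rule bij_betw_inv_into)
  have "\<forall>c\<in>component ` V. \<exists>\<phi>. bij_betw \<phi> c W \<and> (\<forall>x\<in>c. \<forall>y\<in>c. E x y \<longleftrightarrow> F (\<phi> x) (\<phi> y))"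
    using loc unfolding graph_iso_def by blast
  then obtain \<Psi> where "\<forall>c\<in>component ` V. bij_betw (\<Psi> c) c W \<and> (\<forall>x\<in>c. \<forall>y\<in>c. E x y \<longleftrightarrow> F (\<Psi> c x) (\<Psi> c y))"
    by (metis bchoice)
  then have \<psi>: "\<And>r. r \<in> V \<Longrightarrow> bij_betw (\<Psi> (component r)) (component r) W
      \<and> (\<forall>x\<in>component r. \<forall>y\<in>component r. E x y \<longleftrightarrow> F (\<Psi> (component r) x) (\<Psi> (component r) y))"
    by blast
  define h where "h v = (?idx (component v), \<Psi> (component v) v)" for v
  have "bij_betw h V (copies_V m W)"
    unfolding h_def using idx \<psi> by (intro bij_betw_component_coordinates) blast+
  moreover have "E x y \<longleftrightarrow> copies_E m F (h x) (h y)" if xy: "x \<in> V" "y \<in> V" for x y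
  proof
    assume "E x y"
    then have "component y = component x" "y \<in> component x"
      using component_eq edge_component by blast+
    then show "copies_E m F (h x) (h y)"
      using \<open>E x y\<close> \<psi>[OF xy(1)] in_component_self bij_betw_apply[OF idx] xy
      unfolding copies_E_def h_def by auto
  next
    assume e: "copies_E m F (h x) (h y)"
    then have c: "component y = component x"
      using component_index_eq_iff[OF idx xy] unfolding copies_E_def h_def by auto
    then have "y \<in> component x" using in_component_self by metis
    then show "E x y"
      using e c \<psi>[OF xy(1)] in_component_self unfolding copies_E_def h_def by auto
  qed
  ultimately show ?thesis unfolding graph_iso_def m_def by blast
qed

definition path :: "'a list \<Rightarrow> bool" where
  "path xs \<longleftrightarrow> distinct xs \<and> set xs \<subseteq> V \<and> successively E xs"

definition chordless :: "'a list \<Rightarrow> bool" where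
  "chordless xs \<longleftrightarrow> (\<forall>i<length xs. \<forall>j<length xs. E (xs!i) (xs!j) \<longrightarrow> j = Suc i \<or> i = Suc j)"

definition induced_cycle :: "'a list \<Rightarrow> bool" where
  "induced_cycle zs \<longleftrightarrow> 3 \<le> length zs \<and> distinct zs \<and> set zs \<subseteq> V \<and>
     (\<forall>i<length zs. \<forall>j<length zs. E (zs!i) (zs!j) \<longleftrightarrow> C_E (length zs) i j)"

lemma path_edge: "path xs \<Longrightarrow> Suc i < length xs \<Longrightarrow> E (xs!i) (xs!Suc i)"
  unfolding path_def by (simp add: successively_nth)

lemma path_reach:
  assumes "path xs" "i < length xs"
  shows "(\<lambda>u v. u \<in> set xs \<and> v \<in> set xs \<and> E u v)\<^sup>*\<^sup>* (xs!0) (xs!i)"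
  using assms(2)
proof (induction i)
  case (Suc i)
  then show ?case using path_edge[OF assms(1)]
    by (metis (no_types, lifting) Suc_lessD nth_mem rtranclp.rtrancl_into_rtrancl)
qed simp

lemma conn_induced_path:
  assumes "path xs" "xs \<noteq> []"
  shows "conn_induced V E (set xs)"
  unfolding conn_induced_def
proof (intro conjI ballI)
  show "set xs \<subseteq> V" "finite (set xs)" "set xs \<noteq> {}" using assms unfolding path_def by auto
  let ?R = "\<lambda>u v. u \<in> set xs \<and> v \<in> set xs \<and> E u v"
  have "symp ?R\<^sup>*\<^sup>*" by (rule symp_rtranclp) (auto simp: symp_def intro: edge_sym)
  fix x y assume "x \<in> set xs" "y \<in> set xs"
  then obtain i j where "i < length xs" "j < length xs" "x = xs!i" "y = xs!j" by (metis in_set_conv_nth)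
  then show "?R\<^sup>*\<^sup>* x y" using path_reach[OF assms(1)] \<open>symp ?R\<^sup>*\<^sup>*\<close>
    by (meson rtranclp_trans sympD)
qed

lemma path_take_drop: "path xs \<Longrightarrow> path (take k (drop a xs))"
  unfolding path_def successively_conv_nth
  by (auto simp: nth_take nth_drop dest: in_set_takeD in_set_dropD)

lemma path_snoc:
  assumes "path xs" "w \<notin> set xs" "w \<in> V" "xs \<noteq> []" "E (last xs) w"
  shows "path (xs @ [w])"
  using assms unfolding path_def by (simp add: successively_append_iff)

lemma chordlessD:
  "chordless xs \<Longrightarrow> i < length xs \<Longrightarrow> j < length xs \<Longrightarrow> E (xs!i) (xs!j) \<Longrightarrow> j = Suc i \<or> i = Suc j"
  unfolding chordless_def by blast

lemma length_path_le: "path xs \<Longrightarrow> length xs \<le> card V"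
  unfolding path_def using finite_V by (metis card_mono distinct_card)

text \<open>The last vertex of a longest path has a neighbour other than its predecessor; by maximality
  that neighbour lies on the path, which gives a chord.\<close>
lemma ex_non_chordless_path:
  assumes "V \<noteq> {}" and deg: "\<And>v. v \<in> V \<Longrightarrow> 2 \<le> card (nbrs v)"
  obtains xs where "path xs" "\<not> chordless xs"
proof -
  obtain v where "v \<in> V" using assms(1) by blast
  then have "path [v]" unfolding path_def by simp
  then have "\<exists>xs. path xs \<and> (\<forall>ys. path ys \<longrightarrow> length ys \<le> length xs)"
    by (rule ex_has_greatest_nat[where b = "card V + 1"]) (simp add: length_path_le less_Suc_eq_le)
  then obtain xs where xs: "path xs" and longest: "\<And>ys. path ys \<Longrightarrow> length ys \<le> length xs"
    by blast
  define k where "k = length xs"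
  have "k \<ge> 1" using longest[OF \<open>path [v]\<close>] unfolding k_def by simp
  then have "xs \<noteq> []" unfolding k_def by auto
  then have last: "last xs = xs!(k-1)" unfolding k_def by (simp add: last_conv_nth)
  have "xs!(k-1) \<in> V" using xs \<open>k \<ge> 1\<close> unfolding path_def k_def by auto
  then have "\<not> nbrs (xs!(k-1)) \<subseteq> {xs!(k-2)}"
    using deg card_mono[OF finite.insertI[OF finite.emptyI], of "nbrs (xs!(k-1))" "xs!(k-2)"] by force
  then obtain w where w: "E (xs!(k-1)) w" "w \<noteq> xs!(k-2)" unfolding nbrs_def by blast
  have "w \<in> set xs"
  proof (rule ccontr)
    assume "w \<notin> set xs"
    then have "path (xs @ [w])" using path_snoc xs \<open>xs \<noteq> []\<close> last w edge_in_V by metis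
    then show False using longest by fastforce
  qed
  then obtain j where j: "j < k" "w = xs!j" unfolding k_def by (metis in_set_conv_nth)
  moreover have "j \<noteq> k - 2" "k - 1 < k" using w j \<open>k \<ge> 1\<close> by auto
  ultimately have "\<not> chordless xs" using w(1) chordlessD[of xs "k-1" j] unfolding k_def by force
  then show ?thesis using xs that by blast
qed

definition shortest_non_chordless :: "'a list \<Rightarrow> bool" where
  "shortest_non_chordless zs \<longleftrightarrow> path zs \<and> \<not> chordless zs \<and>
     (\<forall>ys. path ys \<and> length ys < length zs \<longrightarrow> chordless ys)"

lemma ex_shortest_non_chordless:
  assumes "path xs" "\<not> chordless xs"
  obtains zs where "shortest_non_chordless zs"
proof -
  obtain zs where "path zs \<and> \<not> chordless zs"
    and "\<And>ys. path ys \<and> \<not> chordless ys \<Longrightarrow> length zs \<le> length ys"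
    using ex_has_least_nat[of "\<lambda>xs. path xs \<and> \<not> chordless xs" xs length] assms by blast
  then show ?thesis using that unfolding shortest_non_chordless_def by (meson not_le)
qed

text \<open>A chord of a path of the shortest non-chordless length cuts off a shorter non-chordless path,
  unless it joins the two ends.\<close>
lemma chord_of_shortest:
  assumes shorter: "\<And>ys. path ys \<Longrightarrow> length ys < length zs \<Longrightarrow> chordless ys"
    and "path zs" "a < b" "b < length zs" "E (zs!a) (zs!b)"
  shows "b = Suc a \<or> (a = 0 \<and> b = length zs - 1)"
proof (rule ccontr)
  assume c: "\<not> ?thesis"
  define ws where "ws = take (b - a + 1) (drop a zs)"
  have "length ws = b - a + 1" "ws!0 = zs!a" "ws!(b-a) = zs!b"
    using assms(3,4) unfolding ws_def by auto
  moreover have "chordless ws"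
    using shorter path_take_drop[OF assms(2)] c assms(3,4) unfolding ws_def by force
  ultimately show False using chordlessD[of ws 0 "b-a"] assms(3,5) c by force
qed

lemma induced_cycle_if_shortest_non_chordless:
  assumes "shortest_non_chordless zs"
  shows "induced_cycle zs"
proof -
  let ?l = "length zs"
  have zs: "path zs" "\<not> chordless zs" and shorter: "\<And>ys. path ys \<Longrightarrow> length ys < ?l \<Longrightarrow> chordless ys"
    using assms unfolding shortest_non_chordless_def by blast+
  have chord: "E (zs!a) (zs!b) \<Longrightarrow> C_E ?l a b" if "a < ?l" "b < ?l" for a b
  proof -
    assume e: "E (zs!a) (zs!b)"
    have "a \<noteq> b" using e no_loop by blast
    then consider "a < b" | "b < a" by linarith
    then show "C_E ?l a b" unfolding C_E_iff_index
      using chord_of_shortest[OF shorter zs(1)] e edge_sym that by cases fastforce+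
  qed
  obtain a b where ab: "a < ?l" "b < ?l" "E (zs!a) (zs!b)" "b \<noteq> Suc a" "a \<noteq> Suc b"
    using zs(2) unfolding chordless_def by blast
  moreover have "a \<noteq> b" using ab(3) no_loop by blast
  ultimately have "3 \<le> ?l" using chord[OF ab(1,2)] unfolding C_E_iff_index by auto
  moreover have ends: "E (zs!0) (zs!(?l - 1))"
    using ab chord[OF ab(1,2)] edge_sym unfolding C_E_iff_index by auto
  then have "E (zs!a) (zs!b)" if "C_E ?l a b" for a b
    using that path_edge[OF zs(1)] edge_sym unfolding C_E_iff_index by auto
  ultimately show ?thesis using zs(1) chord unfolding induced_cycle_def path_def by blast
qed

lemma component_complete:
  assumes r: "r \<in> V" and trans: "\<And>x y z. E x y \<Longrightarrow> E y z \<Longrightarrow> x \<noteq> z \<Longrightarrow> E x z"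
  shows "graph_iso (component r) E (K_V (card (nbrs r) + 1)) (K_E (card (nbrs r) + 1))"
proof -
  have comp: "component r = insert r (nbrs r)"
  proof
    show "insert r (nbrs r) \<subseteq> component r"
      using in_component_self edge_component unfolding nbrs_def by blast
    show "component r \<subseteq> insert r (nbrs r)"
    proof
      fix u assume "u \<in> component r"
      then have "E\<^sup>*\<^sup>* r u" unfolding component_def by simp
      then show "u \<in> insert r (nbrs r)"
        by induction (auto simp: nbrs_def intro: trans)
    qed
  qed
  have "r \<notin> nbrs r" using no_loop unfolding nbrs_def by simp
  then have "card (component r) = card (nbrs r) + 1" using comp finite_nbrs by simp
  moreover have "E x y \<longleftrightarrow> x \<noteq> y" if "x \<in> component r" "y \<in> component r" for x y
  proof
    assume "x \<noteq> y"
    moreover have "x = r \<or> E r x" "y = r \<or> E r y" using that comp unfolding nbrs_def by auto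
    ultimately show "E x y" using trans edge_sym by metis
  qed (use no_loop in blast)
  ultimately show ?thesis using graph_iso_K comp finite_nbrs by (metis finite_insert)
qed

lemma nbrs_eq_at_distance_two:
  assumes triangle_free: "\<And>x y z. E x y \<Longrightarrow> E y z \<Longrightarrow> \<not> E x z"
    and square: "\<And>a b c e. path [a, b, c, e] \<Longrightarrow> E a e"
    and "E r u" "E u v" "v \<noteq> r"
  shows "nbrs v = nbrs r"
proof -
  have square': "E a e" if "E a b" "E b c" "E c e" "a \<noteq> c" "b \<noteq> e" "a \<noteq> e" for a b c e
  proof (rule square)
    show "path [a, b, c, e]" unfolding path_def using that no_loop edge_in_V by auto
  qed
  have "\<not> E r v" using triangle_free assms(3,4) by blast
  have "x \<in> nbrs r" if "E v x" for x
    using square'[of x v u r] that assms(3-5) \<open>\<not> E r v\<close> edge_sym no_loop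
    unfolding nbrs_def by (cases "x = u") auto
  moreover have "x \<in> nbrs v" if "E r x" for x
    using square'[of x r u v] that assms(3-5) \<open>\<not> E r v\<close> edge_sym no_loop
    unfolding nbrs_def by (cases "x = u") auto
  ultimately show ?thesis unfolding nbrs_def by blast
qed

lemma component_complete_bipartite:
  assumes r: "r \<in> V"
    and triangle_free: "\<And>x y z. E x y \<Longrightarrow> E y z \<Longrightarrow> \<not> E x z"
    and square: "\<And>a b c e. path [a, b, c, e] \<Longrightarrow> E a e"
    and reg: "\<And>v. v \<in> V \<Longrightarrow> card (nbrs v) = d" and "1 \<le> d"
  shows "graph_iso (component r) E (Kss_V d) (Kss_E d)"
proof -
  define L where "L = {u \<in> component r. nbrs u = nbrs r}"
  define R where "R = nbrs r"
  have dist2: "nbrs v = nbrs r" if "E r u" "E u v" "v \<noteq> r" for u v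
    using triangle_free square that by (rule nbrs_eq_at_distance_two)
  have side: "E r u \<or> nbrs u = nbrs r" if "u \<in> component r" for u
  proof -
    from that have "E\<^sup>*\<^sup>* r u" unfolding component_def by simp
    then show ?thesis
    proof induction
      case (step u v)
      then show ?case using dist2[of u v] unfolding nbrs_def by blast
    qed simp
  qed
  have comp: "component r = L \<union> R"
    using side edge_component unfolding L_def R_def nbrs_def by blast
  have disj: "L \<inter> R = {}" using no_loop unfolding L_def R_def nbrs_def by blast
  obtain w where w: "w \<in> R" using reg[OF r] \<open>1 \<le> d\<close> unfolding R_def by fastforce
  have "L = nbrs w"
  proof
    show "L \<subseteq> nbrs w" using w edge_sym unfolding L_def R_def nbrs_def by blast
    show "nbrs w \<subseteq> L"
    proof
      fix x assume x: "x \<in> nbrs w"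
      then have "x \<in> component r" "\<not> E r x"
        using w triangle_free component_eq edge_component unfolding R_def nbrs_def by blast+
      then show "x \<in> L" using side unfolding L_def by blast
    qed
  qed
  then have "card L = d" "card R = d" using reg w nbrs_subset r unfolding R_def by auto
  moreover have "E x y \<longleftrightarrow> (x \<in> L \<longleftrightarrow> y \<in> R)" if "x \<in> L \<union> R" "y \<in> L \<union> R" for x y
    using that disj triangle_free edge_sym unfolding L_def R_def nbrs_def by blast
  moreover have "finite L" "finite R" using \<open>L = nbrs w\<close> finite_nbrs unfolding R_def by simp_all
  ultimately show ?thesis using graph_iso_Kss disj comp by metis
qed

lemma nbrs_subset_induced_cycle:
  assumes cyc: "induced_cycle zs" and u: "u \<in> set zs" and deg: "card (nbrs u) \<le> 2"
  shows "nbrs u \<subseteq> set zs"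
proof -
  let ?l = "length zs"
  have l: "3 \<le> ?l" and dz: "distinct zs"
    and adj: "\<And>i j. i < ?l \<Longrightarrow> j < ?l \<Longrightarrow> E (zs!i) (zs!j) \<longleftrightarrow> C_E ?l i j"
    using cyc unfolding induced_cycle_def by auto
  obtain i where i: "i < ?l" "u = zs!i" using u by (metis in_set_conv_nth)
  obtain j1 j2 where j: "j1 \<noteq> j2" "C_E ?l i j1" "C_E ?l i j2" using C_E_two_neighbours[OF l i(1)] .
  then have lt: "j1 < ?l" "j2 < ?l" unfolding C_E_def by auto
  then have sub: "{zs!j1, zs!j2} \<subseteq> nbrs u" using adj i j unfolding nbrs_def by auto
  moreover have "card {zs!j1, zs!j2} = 2" using j(1) lt dz by (simp add: nth_eq_iff_index_eq)
  ultimately have "nbrs u = {zs!j1, zs!j2}"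
    using card_subset_eq[OF finite_nbrs sub] deg card_mono[OF finite_nbrs sub] by simp
  then show ?thesis using lt by auto
qed

lemma component_induced_cycle:
  assumes cyc: "induced_cycle zs" and deg: "\<And>v. v \<in> V \<Longrightarrow> card (nbrs v) \<le> 2"
  shows "graph_iso (component (zs!0)) E (C_V (length zs)) (C_E (length zs))"
proof -
  let ?l = "length zs"
  have l: "3 \<le> ?l" and dz: "distinct zs" and zV: "set zs \<subseteq> V"
    and adj: "\<And>i j. i < ?l \<Longrightarrow> j < ?l \<Longrightarrow> E (zs!i) (zs!j) \<longleftrightarrow> C_E ?l i j"
    using cyc unfolding induced_cycle_def by auto
  have "component (zs!0) = set zs"
  proof
    have "path zs" unfolding path_def successively_conv_nth using dz zV adj C_E_iff_index by auto
    show "set zs \<subseteq> component (zs!0)"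
    proof
      fix x assume "x \<in> set zs"
      then obtain i where "i < ?l" "x = zs!i" by (metis in_set_conv_nth)
      then have "(\<lambda>u v. u \<in> set zs \<and> v \<in> set zs \<and> E u v)\<^sup>*\<^sup>* (zs!0) x"
        using path_reach[OF \<open>path zs\<close>] by simp
      then have "E\<^sup>*\<^sup>* (zs!0) x" by (rule rtranclp_mono[THEN predicate2D, rotated]) auto
      then show "x \<in> component (zs!0)" unfolding component_def by simp
    qed
    show "component (zs!0) \<subseteq> set zs"
    proof
      fix x assume "x \<in> component (zs!0)"
      then have "E\<^sup>*\<^sup>* (zs!0) x" unfolding component_def by simp
      then show "x \<in> set zs"
      proof induction
        case (step u v)
        then show ?case using nbrs_subset_induced_cycle[OF cyc] deg zV unfolding nbrs_def by blast
      qed (use l in \<open>auto intro: nth_mem\<close>)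
    qed
  qed
  then show ?thesis using graph_iso_C[OF dz adj] by simp
qed

lemma induced_cycle_map_automorphism:
  assumes \<sigma>: "automorphism V E \<sigma>" and cyc: "induced_cycle zs"
  shows "induced_cycle (map \<sigma> zs)"
proof -
  have b: "bij_betw \<sigma> V V" and \<sigma>E: "\<And>x y. x \<in> V \<Longrightarrow> y \<in> V \<Longrightarrow> E x y \<longleftrightarrow> E (\<sigma> x) (\<sigma> y)"
    using \<sigma> unfolding automorphism_def by auto
  have zV: "set zs \<subseteq> V" and dz: "distinct zs" using cyc unfolding induced_cycle_def by auto
  have "distinct (map \<sigma> zs)"
    using dz inj_on_subset[OF bij_betw_imp_inj_on[OF b] zV] by (simp add: distinct_map)
  moreover have "set (map \<sigma> zs) \<subseteq> V" using zV bij_betw_apply[OF b] by auto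
  moreover have "E (\<sigma> (zs!i)) (\<sigma> (zs!j)) \<longleftrightarrow> E (zs!i) (zs!j)" if "i < length zs" "j < length zs" for i j
    using \<sigma>E zV that by (simp add: subset_iff)
  ultimately show ?thesis using cyc unfolding induced_cycle_def by simp
qed

lemma triangle_free_if_shortest_non_chordless:
  assumes "shortest_non_chordless zs" "3 < length zs" "E x y" "E y z"
  shows "\<not> E x z"
proof
  assume "E x z"
  then have "x \<noteq> z" using no_loop by blast
  then have "path [x, y, z]" unfolding path_def using assms(3,4) no_loop edge_in_V by auto
  moreover have "\<not> chordless [x, y, z]" using \<open>E x z\<close> chordlessD[of "[x, y, z]" 0 2] by force
  ultimately show False using assms(1,2) unfolding shortest_non_chordless_def by fastforce
qed

text \<open>By \<open>chord_of_shortest\<close>, the only possible chord of such a path joins its ends.\<close>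
lemma chordless_if_ends_not_adjacent:
  assumes short: "shortest_non_chordless zs" and ys: "path ys" "length ys = length zs"
    and ends: "\<not> E (hd ys) (last ys)"
  shows "chordless ys"
  unfolding chordless_def
proof (intro allI impI)
  have shorter: "\<And>ys'. path ys' \<Longrightarrow> length ys' < length ys \<Longrightarrow> chordless ys'"
    using short ys(2) unfolding shortest_non_chordless_def by simp
  have "ys \<noteq> []" using short ys(2) unfolding shortest_non_chordless_def chordless_def by auto
  then have chord: "b = Suc a" if "a < b" "b < length ys" "E (ys!a) (ys!b)" for a b
    using chord_of_shortest[OF shorter ys(1) that] that ends by (auto simp: hd_conv_nth last_conv_nth)
  fix i j assume "i < length ys" "j < length ys" "E (ys!i) (ys!j)"
  then show "j = Suc i \<or> i = Suc j"
    using chord[of i j] chord[of j i] edge_sym no_loop by (cases i j rule: linorder_cases) auto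
qed

text \<open>Otherwise \<open>zs!0, zs!1, t, zs!(length zs - 1)\<close> would be a shorter path with a chord.\<close>
lemma no_shortcut_if_shortest_non_chordless:
  assumes short: "shortest_non_chordless zs" and l: "5 \<le> length zs"
    and t: "E (zs!1) t" "t \<notin> set zs"
  shows "\<not> E t (zs!(length zs - 1))"
proof
  let ?l = "length zs"
  let ?ws = "[zs!0, zs!1, t, zs!(?l - 1)]"
  assume last: "E t (zs!(?l - 1))"
  have zs: "path zs" and shorter: "\<And>ys. path ys \<Longrightarrow> length ys < ?l \<Longrightarrow> chordless ys"
    using short unfolding shortest_non_chordless_def by blast+
  have dz: "distinct zs" and zV: "set zs \<subseteq> V" and ne: "zs \<noteq> []"
    using zs l unfolding path_def by auto
  have "zs!0 \<noteq> zs!1" "zs!0 \<noteq> zs!(?l - 1)" "zs!1 \<noteq> zs!(?l - 1)"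
    using nth_eq_iff_index_eq[OF dz, of 0 1] nth_eq_iff_index_eq[OF dz, of 0 "?l - 1"]
      nth_eq_iff_index_eq[OF dz, of 1 "?l - 1"] l ne by simp_all
  moreover have "zs!0 \<in> V" "zs!(?l - 1) \<in> V"
    using subsetD[OF zV nth_mem, of 0] subsetD[OF zV nth_mem, of "?l - 1"] l ne by simp_all
  moreover have "t \<noteq> zs!0" using t(2) nth_mem[of 0 zs] ne by auto
  ultimately have "path ?ws"
    using last t edge_in_V zV l path_edge[OF zs, of 0] unfolding path_def by auto
  moreover have "E (zs!0) (zs!(?l - 1))"
    using induced_cycle_if_shortest_non_chordless[OF short] l ne
    unfolding induced_cycle_def C_E_iff_index by simp
  then have "\<not> chordless ?ws" using chordlessD[of ?ws 0 3] by force
  ultimately show False using shorter l by force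
qed

end

section \<open>Finite graphs with the \<open>\<C>\<close>-MI property\<close>

locale cmi_graph = finite_graph +
  assumes C_MI: "C_MI V E"
begin

lemma vertex_transitive:
  assumes "u \<in> V" "v \<in> V"
  obtains \<sigma> where "automorphism V E \<sigma>" "\<sigma> u = v"
proof -
  have "conn_induced V E {u}" "mono_from V E {u} (\<lambda>_. v)"
    using assms no_loop unfolding conn_induced_def mono_from_def by auto
  then show ?thesis using C_MI_E[OF C_MI] that by blast
qed

lemma regular:
  obtains d where "\<And>v. v \<in> V \<Longrightarrow> card (nbrs v) = d"
proof (cases "V = {}")
  case False
  then obtain u where "u \<in> V" by blast
  have "card (nbrs v) = card (nbrs u)" if "v \<in> V" for v
    using vertex_transitive[OF that \<open>u \<in> V\<close>] automorphism_nbrs that bij_betw_same_card by metis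
  then show ?thesis using that by blast
qed (use that in blast)

text \<open>A bijection between two paths of the same length, one of them chordless, is a monomorphism
  of the chordless one, so it extends to an automorphism.\<close>
lemma chordless_transfer:
  assumes xs: "path xs" "chordless xs" and ys: "path ys" "length ys = length xs"
  shows "chordless ys"
proof (cases "xs = []")
  case False
  let ?n = "length xs"
  have bn: "bij_betw (nth xs) {..<?n} (set xs)" using xs(1) unfolding path_def by (simp add: bij_betw_nth)
  define f where "f x = ys ! (inv_into {..<?n} (nth xs) x)" for x
  have fi: "f (xs!i) = ys!i" if "i < ?n" for i
    using bn that unfolding f_def by (simp add: bij_betw_def inv_into_f_f)
  have "mono_from V E (set xs) f"
    unfolding mono_from_def
  proof (intro conjI ballI impI)
    show "f ` set xs \<subseteq> V"
    proof
      fix y assume "y \<in> f ` set xs"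
      then obtain i where "i < ?n" "y = ys!i" using fi by (auto simp: in_set_conv_nth)
      then show "y \<in> V" using ys unfolding path_def by (metis nth_mem subsetD)
    qed
    show "inj_on f (set xs)"
    proof (rule inj_onI)
      fix x y assume "x \<in> set xs" "y \<in> set xs" "f x = f y"
      then obtain i j where "i < ?n" "j < ?n" "x = xs!i" "y = xs!j" "ys!i = ys!j"
        using fi by (metis in_set_conv_nth)
      then show "x = y" using ys unfolding path_def by (simp add: nth_eq_iff_index_eq)
    qed
    fix x y assume "x \<in> set xs" "y \<in> set xs" "E x y"
    then obtain i j where ij: "i < ?n" "j < ?n" "x = xs!i" "y = xs!j" by (metis in_set_conv_nth)
    then have "j = Suc i \<or> i = Suc j" using chordlessD[OF xs(2)] \<open>E x y\<close> by blast
    then show "E (f x) (f y)" using path_edge[OF ys(1)] edge_sym ij fi ys(2) by auto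
  qed
  then obtain g where g: "automorphism V E g" "\<And>x. x \<in> set xs \<Longrightarrow> g x = f x"
    using C_MI_E[OF C_MI conn_induced_path[OF xs(1) False]] by blast
  show ?thesis
    unfolding chordless_def
  proof (intro allI impI)
    fix i j assume ij: "i < length ys" "j < length ys" "E (ys!i) (ys!j)"
    have "xs!i \<in> V" "xs!j \<in> V" using xs(1) ij ys(2) unfolding path_def by auto
    then have "E (xs!i) (xs!j)"
      using g ij fi ys(2) unfolding automorphism_def by (metis nth_mem)
    then show "j = Suc i \<or> i = Suc j" using chordlessD[OF xs(2)] ij ys(2) by simp
  qed
qed (use ys in \<open>simp add: chordless_def\<close>)

lemma square_if_shortest_non_chordless:
  assumes short: "shortest_non_chordless zs" and l: "length zs = 4" and p: "path [a, b, c, e]"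
  shows "E a e"
proof (rule ccontr)
  assume "\<not> E a e"
  have "E a b" "E b c" "E c e" using p path_edge[of "[a, b, c, e]"] by force+
  then have "\<not> E a c" "\<not> E b e"
    using triangle_free_if_shortest_non_chordless[OF short] l by simp_all
  then have induced: "chordless [a, b, c, e]"
    using \<open>\<not> E a e\<close> no_loop edge_sym unfolding chordless_def by (auto simp: less_Suc_eq numeral_eq_Suc)
  have "chordless zs"
    using chordless_transfer[OF p induced, of zs] short l unfolding shortest_non_chordless_def by simp
  then show False using short unfolding shortest_non_chordless_def by blast
qed

text \<open>A third neighbour of \<open>zs ! 1\<close> gives a path as long as \<open>zs\<close> with non-adjacent ends,
  which is chordless, so \<open>zs\<close> would be chordless too.\<close>
lemma degree_le_2_if_shortest_non_chordless:
  assumes short: "shortest_non_chordless zs" and l: "5 \<le> length zs"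
  shows "card (nbrs (zs!1)) \<le> 2"
proof (rule ccontr)
  let ?l = "length zs"
  have zs: "path zs" "\<not> chordless zs" using short unfolding shortest_non_chordless_def by blast+
  have adj: "\<And>i j. i < ?l \<Longrightarrow> j < ?l \<Longrightarrow> E (zs!i) (zs!j) \<longleftrightarrow> C_E ?l i j"
    using induced_cycle_if_shortest_non_chordless[OF short] unfolding induced_cycle_def by blast
  assume "\<not> card (nbrs (zs!1)) \<le> 2"
  then have "\<not> nbrs (zs!1) \<subseteq> {zs!0, zs!2}"
    using card_mono[of "{zs!0, zs!2}" "nbrs (zs!1)"] card_insert_le_m1[of 2 "{zs!2}" "zs!0"] by force
  then obtain t where t: "E (zs!1) t" "t \<noteq> zs!0" "t \<noteq> zs!2" unfolding nbrs_def by blast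
  have "t \<notin> set zs"
  proof
    assume "t \<in> set zs"
    then obtain j where "j < ?l" "t = zs!j" by (metis in_set_conv_nth)
    then show False using t adj[of 1 j] l unfolding C_E_iff_index by (auto simp: numeral_2_eq_2)
  qed
  obtain z0 zs' where zs_eq: "zs = z0 # zs'" using l by (cases zs) auto
  have "zs' \<noteq> []" using l unfolding zs_eq by auto
  have "path (t # zs')"
    using zs(1) t edge_in_V \<open>t \<notin> set zs\<close> l unfolding zs_eq path_def
    by (auto simp: successively_Cons hd_conv_nth intro: edge_sym)
  moreover have "\<not> E t (last zs')"
    using no_shortcut_if_shortest_non_chordless[OF short l t(1) \<open>t \<notin> set zs\<close>] \<open>zs' \<noteq> []\<close>
    unfolding zs_eq by (simp add: last_conv_nth)
  ultimately have rerouted: "chordless (t # zs')"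
    using chordless_if_ends_not_adjacent[OF short, of "t # zs'"] \<open>zs' \<noteq> []\<close> unfolding zs_eq by simp
  have "chordless zs"
    using chordless_transfer[OF \<open>path (t # zs')\<close> rerouted zs(1)] unfolding zs_eq by simp
  then show False using zs(2) by blast
qed

lemma copies_K_if_P3_free:
  assumes "\<And>x y z. E x y \<Longrightarrow> E y z \<Longrightarrow> x \<noteq> z \<Longrightarrow> E x z"
  shows "\<exists>n\<ge>1. graph_iso V E (copies_V (card (component ` V)) (K_V n)) (copies_E (card (component ` V)) (K_E n))"
proof -
  obtain d where reg: "\<And>v. v \<in> V \<Longrightarrow> card (nbrs v) = d" using regular by blast
  have "graph_iso V E (copies_V (card (component ` V)) (K_V (d + 1))) (copies_E (card (component ` V)) (K_E (d + 1)))"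
  proof (rule graph_iso_copies)
    fix r assume "r \<in> V"
    from this assms have "graph_iso (component r) E (K_V (card (nbrs r) + 1)) (K_E (card (nbrs r) + 1))"
      by (rule component_complete)
    then show "graph_iso (component r) E (K_V (d + 1)) (K_E (d + 1))" using reg \<open>r \<in> V\<close> by simp
  qed
  then show ?thesis by auto
qed

lemma copies_Kss_if_shortest_non_chordless:
  assumes short: "shortest_non_chordless zs" and l: "length zs = 4"
  shows "\<exists>s\<ge>2. graph_iso V E (copies_V (card (component ` V)) (Kss_V s)) (copies_E (card (component ` V)) (Kss_E s))"
proof -
  obtain d where reg: "\<And>v. v \<in> V \<Longrightarrow> card (nbrs v) = d" using regular by blast
  have cyc: "induced_cycle zs" using induced_cycle_if_shortest_non_chordless[OF short] .
  then have "{zs!1, zs!3} \<subseteq> nbrs (zs!0)" "zs!1 \<noteq> zs!3" "zs!0 \<in> V"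
    using l unfolding induced_cycle_def nbrs_def C_E_iff_index by (auto simp: nth_eq_iff_index_eq)
  then have "card {zs!1, zs!3} \<le> d" using reg card_mono[OF finite_nbrs] by metis
  then have "2 \<le> d" using \<open>zs!1 \<noteq> zs!3\<close> by simp
  moreover have "graph_iso V E (copies_V (card (component ` V)) (Kss_V d)) (copies_E (card (component ` V)) (Kss_E d))"
  proof (rule graph_iso_copies)
    fix r assume "r \<in> V"
    show "graph_iso (component r) E (Kss_V d) (Kss_E d)"
    proof (rule component_complete_bipartite[OF \<open>r \<in> V\<close> _ _ reg])
      show "\<And>x y z. E x y \<Longrightarrow> E y z \<Longrightarrow> \<not> E x z"
        using triangle_free_if_shortest_non_chordless[OF short] l by simp
      show "\<And>a b c e. path [a, b, c, e] \<Longrightarrow> E a e"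
        using square_if_shortest_non_chordless[OF short l] .
      show "1 \<le> d" using \<open>2 \<le> d\<close> by simp
    qed
  qed
  ultimately show ?thesis by blast
qed

lemma copies_C_if_shortest_non_chordless:
  assumes short: "shortest_non_chordless zs" and l: "5 \<le> length zs"
  shows "\<exists>n\<ge>3. graph_iso V E (copies_V (card (component ` V)) (C_V n)) (copies_E (card (component ` V)) (C_E n))"
proof -
  obtain d where reg: "\<And>v. v \<in> V \<Longrightarrow> card (nbrs v) = d" using regular by blast
  have cyc: "induced_cycle zs" using induced_cycle_if_shortest_non_chordless[OF short] .
  then have "zs!0 \<in> V" "zs!1 \<in> V"
    using l unfolding induced_cycle_def by (auto intro!: subsetD[OF _ nth_mem])
  then have deg: "\<And>v. v \<in> V \<Longrightarrow> card (nbrs v) \<le> 2"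
    using reg degree_le_2_if_shortest_non_chordless[OF short l] by metis
  have "graph_iso V E (copies_V (card (component ` V)) (C_V (length zs))) (copies_E (card (component ` V)) (C_E (length zs)))"
  proof (rule graph_iso_copies)
    fix r assume "r \<in> V"
    then obtain \<sigma> where \<sigma>: "automorphism V E \<sigma>" "\<sigma> (zs!0) = r" using vertex_transitive \<open>zs!0 \<in> V\<close> by metis
    have "map \<sigma> zs ! 0 = r" using \<sigma>(2) l by (cases zs) auto
    then show "graph_iso (component r) E (C_V (length zs)) (C_E (length zs))"
      using component_induced_cycle[OF induced_cycle_map_automorphism[OF \<sigma>(1) cyc] deg] by simp
  qed
  then show ?thesis using l by (intro exI[where x = "length zs"]) auto
qed

theorem classification:
  "\<exists>m. (\<exists>n\<ge>1. graph_iso V E (copies_V m (K_V n)) (copies_E m (K_E n)))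
     \<or> (\<exists>s\<ge>2. graph_iso V E (copies_V m (Kss_V s)) (copies_E m (Kss_E s)))
     \<or> (\<exists>n\<ge>3. graph_iso V E (copies_V m (C_V n)) (copies_E m (C_E n)))"
proof (cases "\<forall>x y z. E x y \<longrightarrow> E y z \<longrightarrow> x \<noteq> z \<longrightarrow> E x z")
  case True
  then show ?thesis using copies_K_if_P3_free by blast
next
  case False
  then obtain x y z where xyz: "E x y" "E y z" "x \<noteq> z" "\<not> E x z" by blast
  then have p3: "path [x, y, z]" "chordless [x, y, z]"
    using no_loop edge_in_V edge_sym unfolding path_def chordless_def by (auto simp: less_Suc_eq numeral_eq_Suc)
  obtain d where reg: "\<And>v. v \<in> V \<Longrightarrow> card (nbrs v) = d" using regular by blast
  have "{x, z} \<subseteq> nbrs y" "y \<in> V" using xyz edge_sym edge_in_V unfolding nbrs_def by auto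
  then have "card {x, z} \<le> d" using reg card_mono[OF finite_nbrs] by metis
  then have "\<And>v. v \<in> V \<Longrightarrow> 2 \<le> card (nbrs v)" using reg xyz(3) by simp
  moreover have "V \<noteq> {}" using \<open>y \<in> V\<close> by blast
  ultimately obtain xs where "path xs" "\<not> chordless xs" using ex_non_chordless_path by blast
  then obtain zs where short: "shortest_non_chordless zs" by (rule ex_shortest_non_chordless)
  have "length zs \<noteq> 3"
    using chordless_transfer[OF p3, of zs] short unfolding shortest_non_chordless_def by auto
  moreover have "3 \<le> length zs"
    using induced_cycle_if_shortest_non_chordless[OF short] unfolding induced_cycle_def by blast
  ultimately consider "length zs = 4" | "5 \<le> length zs" by linarith
  then show ?thesis
    using copies_Kss_if_shortest_non_chordless[OF short] copies_C_if_shortest_non_chordless[OF short]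
    by cases blast+
qed

end

lemma C_MI_if_classified:
  assumes "\<exists>m. (\<exists>n\<ge>1. graph_iso V E (copies_V m (K_V n)) (copies_E m (K_E n)))
     \<or> (\<exists>s\<ge>2. graph_iso V E (copies_V m (Kss_V s)) (copies_E m (Kss_E s)))
     \<or> (\<exists>n\<ge>3. graph_iso V E (copies_V m (C_V n)) (copies_E m (C_E n)))"
  shows "C_MI V E"
  using assms
proof (elim exE disjE conjE)
  fix m n assume "graph_iso V E (copies_V m (K_V n)) (copies_E m (K_E n))"
  then show ?thesis using C_MI_copies[OF C_MI_K] by (rule C_MI_if_graph_iso)
next
  fix m s assume "graph_iso V E (copies_V m (Kss_V s)) (copies_E m (Kss_E s))"
  then show ?thesis using C_MI_copies[OF C_MI_Kss] by (rule C_MI_if_graph_iso)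
next
  fix m n assume "graph_iso V E (copies_V m (C_V n)) (copies_E m (C_E n))"
  then show ?thesis using C_MI_copies[OF C_MI_C] by (rule C_MI_if_graph_iso)
qed

theorem theorem4p2:
  fixes V :: "'a set" and E :: "'a \<Rightarrow> 'a \<Rightarrow> bool"
  assumes "fin_graph V E"
  shows "C_MI V E \<longleftrightarrow>
    (\<exists>m. (\<exists>n\<ge>1. graph_iso V E (copies_V m (K_V n)) (copies_E m (K_E n)))
       \<or> (\<exists>s\<ge>2. graph_iso V E (copies_V m (Kss_V s)) (copies_E m (Kss_E s)))
       \<or> (\<exists>n\<ge>3. graph_iso V E (copies_V m (C_V n)) (copies_E m (C_E n))))"
proof -
  have "C_MI V E \<Longrightarrow> cmi_graph V E"
    using assms by (simp add: cmi_graph_def cmi_graph_axioms_def finite_graph_def)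
  from iffI[OF cmi_graph.classification[OF this] C_MI_if_classified] show ?thesis .
qed

end
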